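(* For any $n,s\in\mathbb{N}$ and every real number $x$, $$\sum_{k=0}^{n-1}\frac{x^{2k}}{(2k+1)^s}=\sum_{k=1}^n(-1)^{k-1}\binom{n}{k}\,{}_{s+1}F_s\left(\{\tfrac12\}^{s},1-k;\{\tfrac32\}^{s};x^2\right).$$
   Context: $\mathbb{N}$ is the set of positive integers; $\{a\}^s$ denotes $a$ repeated $s$ times. The generalized hypergeometric function is ${}_{s+1}F_s(a_1,\ldots,a_{s+1};b_1,\ldots,b_s;x)=\sum_{i\geq 0}\frac{(a_1)_i\cdots(a_{s+1})_i}{(b_1)_i\cdots(b_s)_i}\frac{x^i}{i!}$, with $(a)_0=1$, $(a)_i=a(a+1)\cdots(a+i-1)$ for $i>0$; here since $1-k$ is a nonpositive integer the series is a finite sum. *)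

theory Defs
  imports "HOL-Analysis.Analysis"
begin

text \<open>In the statement the series
terminates, so suminf is the finite sum.\<close>
definition hyperF :: "real list \<Rightarrow> real list \<Rightarrow> real \<Rightarrow> real" where
  "hyperF as bs x =
     (\<Sum>i. (\<Prod>a\<leftarrow>as. pochhammer a i) / (\<Prod>b\<leftarrow>bs. pochhammer b i) * x ^ i / fact i)"

end

theory Submission imports Defs begin

text \<open>
  Since (1/2)_i / (3/2)_i = 1/(2i+1) and (-m)_i / i! = (-1)^i (m choose i), the terminating
  series with upper parameter 1-k is the term b_(k-1) of the binomial transform
  b_j = \<Sum>_(i\<le>j) (-1)^i (j choose i) a_i of the sequence a_i = x^(2i) / (2i+1)^s.
  The identity \<Sum>_(k<n) a_k = \<Sum>_(j<n) (-1)^j (n choose j+1) b_j holds for every sequence a: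
  by Pascal's rule its induction step on n reduces to the binomial transform being an
  involution.
\<close>

definition binomial_transform :: "(nat \<Rightarrow> 'a::comm_ring_1) \<Rightarrow> nat \<Rightarrow> 'a" where
  "binomial_transform a j = (\<Sum>i\<le>j. (-1)^i * of_nat (j choose i) * a i)"

lemma sum_alternating_choose_mult_choose:
  "(\<Sum>j\<le>n. (-1)^j * of_nat (n choose j) * of_nat (j choose i) :: 'a::comm_ring_1)
     = (if i = n then (-1)^n else 0)"
proof (cases "i \<le> n")
  case False
  then show ?thesis
    by (auto intro!: sum.neutral simp: binomial_eq_0)
next
  case True
  have "(\<Sum>j\<le>n. (-1)^j * of_nat (n choose j) * of_nat (j choose i) :: 'a)
      = (\<Sum>j\<in>{i..n}. (-1)^j * of_nat (n choose i) * of_nat ((n - i) choose (j - i)))"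
  proof (rule sum.mono_neutral_cong_right)
    show "(-1)^j * of_nat (n choose j) * of_nat (j choose i)
        = (-1)^j * of_nat (n choose i) * (of_nat ((n - i) choose (j - i)) :: 'a)"
      if "j \<in> {i..n}" for j
      using choose_mult[of i j n] that by (simp flip: of_nat_mult add: mult.assoc)
  qed (auto simp: binomial_eq_0)
  also have "\<dots> = (\<Sum>l\<le>n - i. (-1)^(l + i) * of_nat (n choose i) * of_nat ((n - i) choose l))"
    using True sum.shift_bounds_cl_nat_ivl[of
        "\<lambda>j. (-1)^j * of_nat (n choose i) * (of_nat ((n - i) choose (j - i)) :: 'a)" 0 i "n - i"]
    by (simp add: atLeast0AtMost)
  also have "\<dots> = (-1)^i * of_nat (n choose i) * (\<Sum>l\<le>n - i. (-1)^l * of_nat ((n - i) choose l))"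
    by (simp add: sum_distrib_left power_add mult_ac)
  also have "\<dots> = (if i = n then (-1)^n else 0)"
    using True choose_alternating_sum[of "n - i", where ?'a = 'a] by auto
  finally show ?thesis .
qed

lemma binomial_transform_binomial_transform:
  "binomial_transform (binomial_transform a) n = a n"
proof -
  have "binomial_transform (binomial_transform a) n
      = (\<Sum>j\<le>n. \<Sum>i\<le>n. (-1)^j * of_nat (n choose j) * ((-1)^i * of_nat (j choose i) * a i))"
    unfolding binomial_transform_def sum_distrib_left
    by (intro sum.cong refl sum.mono_neutral_left) (auto simp: binomial_eq_0)
  also have "\<dots> = (\<Sum>i\<le>n. a i * ((-1)^i * (\<Sum>j\<le>n. (-1)^j * of_nat (n choose j) * of_nat (j choose i))))"
    by (subst sum.swap) (simp add: sum_distrib_left mult_ac)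
  also have "\<dots> = a n"
    by (simp add: sum_alternating_choose_mult_choose if_distrib[of "times _"] flip: power_add
        cong: if_cong)
  finally show ?thesis .
qed

lemma sum_lessThan_eq_binomial_transform:
  "(\<Sum>k<n. a k) = (\<Sum>j<n. (-1)^j * of_nat (n choose Suc j) * binomial_transform a j)"
proof (induction n)
  case 0
  then show ?case by simp
next
  case (Suc n)
  let ?b = "binomial_transform a"
  have "(\<Sum>j<Suc n. (-1)^j * of_nat (Suc n choose Suc j) * ?b j)
      = (\<Sum>j<Suc n. (-1)^j * of_nat (n choose Suc j) * ?b j)
        + (\<Sum>j\<le>n. (-1)^j * of_nat (n choose j) * ?b j)"
    by (simp add: lessThan_Suc_atMost algebra_simps flip: sum.distrib)
  also have "(\<Sum>j\<le>n. (-1)^j * of_nat (n choose j) * ?b j) = a n"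
    using binomial_transform_binomial_transform[of a n]
    by (simp add: binomial_transform_def)
  finally show ?case
    using Suc.IH by (simp add: binomial_eq_0)
qed

lemma pochhammer_half_div_pochhammer_three_halves:
  "pochhammer (1/2::real) i / pochhammer (3/2) i = 1 / (2 * real i + 1)"
proof -
  have "(1/2 + real i) * pochhammer (1/2::real) i = 1/2 * pochhammer (3/2) i"
    using pochhammer_rec[of "1/2::real" i] pochhammer_rec'[of "1/2::real" i] by simp
  moreover have "pochhammer (3/2::real) i \<noteq> 0"
    by (simp add: pochhammer_eq_0_iff)
  ultimately show ?thesis
    by (simp add: field_simps)
qed

lemma pochhammer_minus_of_nat_div_fact:
  "pochhammer (- of_nat m :: 'a::field_char_0) i / fact i = (-1)^i * of_nat (m choose i)"
  by (simp add: binomial_gbinomial gbinomial_pochhammer)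

lemma hyperF_eq_binomial_transform:
  "hyperF (replicate s (1/2) @ [- real m]) (replicate s (3/2)) y
     = binomial_transform (\<lambda>i. y^i / (2 * real i + 1)^s) m"
proof -
  have "(\<Prod>a\<leftarrow>replicate s (1/2) @ [- real m]. pochhammer a i) / (\<Prod>b\<leftarrow>replicate s (3/2). pochhammer b i)
          * y^i / fact i
      = (pochhammer (1/2) i / pochhammer (3/2) i)^s * (pochhammer (- real m) i / fact i) * y^i" for i
    by (simp add: prod_list_replicate power_divide)
  also have "\<dots> i = (if i \<le> m then (-1)^i * real (m choose i) * (y^i / (2 * real i + 1)^s) else 0)" for i
    by (simp add: pochhammer_half_div_pochhammer_three_halves pochhammer_minus_of_nat_div_fact
        power_divide)
  finally show ?thesis
    unfolding hyperF_def binomial_transform_def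
    by (subst suminf_finite[of "{..m}"]) auto
qed

theorem lemma3p1:
  fixes n s :: nat and x :: real
  assumes "n \<ge> 1" and "s \<ge> 1"
  shows "(\<Sum>k=0..n-1. x ^ (2*k) / (2 * real k + 1) ^ s) =
    (\<Sum>k=1..n. (-1) ^ (k-1) * real (n choose k) *
       hyperF (replicate s (1/2) @ [1 - real k]) (replicate s (3/2)) (x^2))"
proof -
  define a where "a i = (x^2)^i / (2 * real i + 1)^s" for i
  obtain m where m: "n = Suc m"
    using assms(1) by (cases n) auto
  have "(\<Sum>k=0..n-1. x ^ (2*k) / (2 * real k + 1) ^ s) = (\<Sum>k<n. a k)"
    by (simp add: m a_def atLeast0AtMost lessThan_Suc_atMost power_mult)
  also have "\<dots> = (\<Sum>j<n. (-1)^j * real (n choose Suc j) * binomial_transform a j)"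
    by (rule sum_lessThan_eq_binomial_transform)
  also have "\<dots> = (\<Sum>j<n. (-1)^j * real (n choose Suc j) *
       hyperF (replicate s (1/2) @ [1 - real (Suc j)]) (replicate s (3/2)) (x^2))"
    by (simp add: hyperF_eq_binomial_transform a_def[abs_def])
  also have "\<dots> = (\<Sum>k=1..n. (-1) ^ (k-1) * real (n choose k) *
       hyperF (replicate s (1/2) @ [1 - real k]) (replicate s (3/2)) (x^2))"
    by (simp add: sum.atLeast1_atMost_eq)
  finally show ?thesis .
qed

end
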